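(* There is no set $\Lambda$ of $\mathcal L$-formulas such that, for every playable $Ł_n$-frame $\mathfrak F$, $\mathfrak F$ is truly playable if and only if every formula of $\Lambda$ is valid in $\mathfrak F$.
   Context: $Ł_n=\{0,\frac1n,\dots,1\}$ with $\neg x=1-x$, $x\oplus y=\min(x+y,1)$, $x\odot y=\max(x+y-1,0)$, $x\to y=\min(1,1-x+y)$, $\wedge=\min$, applied pointwise. $N$ finite set of players, $|N|\ge2$. An $Ł_n$-valued effectivity function on a set $S$ is a map $E:\mathcal P N\times Ł_n^S\to Ł_n$. It is: outcome monotonic if $f\ge g$ implies $E(C,f)\ge E(C,g)$; $N$-maximal if $\neg E(\varnothing,\neg f)\le E(N,f)$; superadditive if $E(C_1,f)\wedge E(C_2,g)\le E(C_1\cup C_2,f\wedge g)$ whenever $C_1\cap C_2=\varnothing$; homogeneous if $E(C,f\oplus f)=E(C,f)\oplus E(C,f)$ and $E(C,f\odot f)=E(C,f)\odot E(C,f)$; has liveness if $E(C,1)=1$ for all $C$; has safety if $E(C,0)=0$ for all $C$; principal if there is $g$ with $\{f\mid E(\varnothing,f)=1\}=\{f\mid f\ge g\odot\cdots\odot g\ (n\text{ factors})\}$. Playable: first six properties; truly playable: playable and principal. Formulas of $\mathcal L$: $\phi::=1\mid p\mid\phi\to\phi\mid\neg\phi\mid[C]\phi$ ($p$ in a countably infinite set $\mathsf{Prop}$, $C\subseteq N$). An $Ł_n$-frame is $(S,E)$ with $S\ne\varnothing$ and $E(u)$ an $Ł_n$-valued effectivity function on $S$ for each $u\in S$; it is (truly)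 playable if every $E(u)$ is. A model on it adds $\mathrm{Val}:S\times\mathsf{Prop}\to Ł_n$, extended by $\mathrm{Val}(u,1)=1$, $\mathrm{Val}(u,\neg\phi)=\neg\mathrm{Val}(u,\phi)$, $\mathrm{Val}(u,\phi\to\psi)=\mathrm{Val}(u,\phi)\to\mathrm{Val}(u,\psi)$, $\mathrm{Val}(u,[C]\phi)=E(u)(C,\mathrm{Val}(-,\phi))$. A formula is true in a model if its value is $1$ at every state, and valid in a frame if true in every model based on the frame. *)

theory Defs
  imports Complex_Main "HOL-Library.Cardinality"
begin

definition luk :: "nat \<Rightarrow> real set" where
  "luk n = {real k / real n | k. k \<le> n}"

definition lneg :: "real \<Rightarrow> real" where "lneg x = 1 - x"
definition loplus :: "real \<Rightarrow> real \<Rightarrow> real" where "loplus x y = min (x + y) 1"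
definition lodot :: "real \<Rightarrow> real \<Rightarrow> real" where "lodot x y = max (x + y - 1) 0"
definition limp :: "real \<Rightarrow> real \<Rightarrow> real" where "limp x y = min 1 (1 - x + y)"

fun lpow :: "nat \<Rightarrow> real \<Rightarrow> real" where
  "lpow 0 x = 1"
| "lpow (Suc k) x = lodot x (lpow k x)"

definition LF :: "nat \<Rightarrow> ('s \<Rightarrow> real) set" where
  "LF n = {f. \<forall>s. f s \<in> luk n}"

section \<open>L_n-valued effectivity functions (players = the finite type 'p, N = UNIV)\<close>

type_synonym ('p, 's) eff = "'p set \<Rightarrow> ('s \<Rightarrow> real) \<Rightarrow> real"

definition eff_fun :: "nat \<Rightarrow> ('p, 's) eff \<Rightarrow> bool" where
  "eff_fun n E \<longleftrightarrow> (\<forall>C f. f \<in> LF n \<longrightarrow> E C f \<in> luk n)"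

definition outcome_monotonic :: "nat \<Rightarrow> ('p, 's) eff \<Rightarrow> bool" where
  "outcome_monotonic n E \<longleftrightarrow>
     (\<forall>C f g. f \<in> LF n \<longrightarrow> g \<in> LF n \<longrightarrow> (\<forall>s. g s \<le> f s) \<longrightarrow> E C g \<le> E C f)"

definition N_maximal :: "nat \<Rightarrow> ('p, 's) eff \<Rightarrow> bool" where
  "N_maximal n E \<longleftrightarrow> (\<forall>f. f \<in> LF n \<longrightarrow> lneg (E {} (\<lambda>s. lneg (f s))) \<le> E UNIV f)"

definition superadditive :: "nat \<Rightarrow> ('p, 's) eff \<Rightarrow> bool" where
  "superadditive n E \<longleftrightarrow>
     (\<forall>C1 C2 f g. f \<in> LF n \<longrightarrow> g \<in> LF n \<longrightarrow> C1 \<inter> C2 = {} \<longrightarrow>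
        min (E C1 f) (E C2 g) \<le> E (C1 \<union> C2) (\<lambda>s. min (f s) (g s)))"

definition homogeneous :: "nat \<Rightarrow> ('p, 's) eff \<Rightarrow> bool" where
  "homogeneous n E \<longleftrightarrow>
     (\<forall>C f. f \<in> LF n \<longrightarrow>
        E C (\<lambda>s. loplus (f s) (f s)) = loplus (E C f) (E C f) \<and>
        E C (\<lambda>s. lodot (f s) (f s)) = lodot (E C f) (E C f))"

definition liveness :: "('p, 's) eff \<Rightarrow> bool" where
  "liveness E \<longleftrightarrow> (\<forall>C. E C (\<lambda>s. 1) = 1)"

definition safety :: "('p, 's) eff \<Rightarrow> bool" where
  "safety E \<longleftrightarrow> (\<forall>C. E C (\<lambda>s. 0) = 0)"

definition principal :: "nat \<Rightarrow> ('p, 's) eff \<Rightarrow> bool" where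
  "principal n E \<longleftrightarrow>
     (\<exists>g \<in> LF n. \<forall>f \<in> LF n. E {} f = 1 \<longleftrightarrow> (\<forall>s. lpow n (g s) \<le> f s))"

definition playable :: "nat \<Rightarrow> ('p, 's) eff \<Rightarrow> bool" where
  "playable n E \<longleftrightarrow> eff_fun n E \<and> outcome_monotonic n E \<and> N_maximal n E \<and>
     superadditive n E \<and> homogeneous n E \<and> liveness E \<and> safety E"

definition truly_playable :: "nat \<Rightarrow> ('p, 's) eff \<Rightarrow> bool" where
  "truly_playable n E \<longleftrightarrow> playable n E \<and> principal n E"

text \<open>A frame is (S, E) with S the (nonempty) universe of the state type 's.\<close>
type_synonym ('p, 's) frame = "'s \<Rightarrow> ('p, 's) eff"

definition playable_frame :: "nat \<Rightarrow> ('p, 's) frame \<Rightarrow> bool" where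
  "playable_frame n F \<longleftrightarrow> (\<forall>u. playable n (F u))"

definition truly_playable_frame :: "nat \<Rightarrow> ('p, 's) frame \<Rightarrow> bool" where
  "truly_playable_frame n F \<longleftrightarrow> (\<forall>u. truly_playable n (F u))"

text \<open>Prop = nat (countably infinite).\<close>
datatype 'p fm = One | Var nat | Imp "'p fm" "'p fm" | Neg "'p fm" | Box "'p set" "'p fm"

fun val :: "('p, 's) frame \<Rightarrow> ('s \<Rightarrow> nat \<Rightarrow> real) \<Rightarrow> 'p fm \<Rightarrow> 's \<Rightarrow> real" where
  "val F V One u = 1"
| "val F V (Var p) u = V u p"
| "val F V (Imp a b) u = limp (val F V a u) (val F V b u)"
| "val F V (Neg a) u = lneg (val F V a u)"
| "val F V (Box C a) u = F u C (\<lambda>t. val F V a t)"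

definition valid_in_frame :: "nat \<Rightarrow> ('p, 's) frame \<Rightarrow> 'p fm \<Rightarrow> bool" where
  "valid_in_frame n F \<phi> \<longleftrightarrow>
     (\<forall>V. (\<forall>u p. V u p \<in> luk n) \<longrightarrow> (\<forall>u. val F V \<phi> u = 1))"

end

theory Submission
  imports Defs "HOL-Combinatorics.Transposition"
begin

text \<open>
  Fix a free ultrafilter \<open>U\<close> on the infinite state set and a state \<open>x\<^sub>0\<close>. In the frame
  where every \<open>E(u)(C, f)\<close> is the \<open>U\<close>-limit of the finitely-valued function \<open>f\<close>, all
  operations of the logic commute with the limit, so the frame is playable; it is not principal
  because a generator \<open>g\<close> would make \<open>g\<^sup>n\<close> positive at some point \<open>b\<close>, and the function
  that is \<open>1\<close> where \<open>g\<^sup>n\<close> is positive except at \<open>b\<close> has limit \<open>1\<close> without lying above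
  \<open>g\<^sup>n\<close>. In the frame where every \<open>E(u)(C, f)\<close> is \<open>f x\<^sub>0\<close>, the effectivity functions
  are principal with generator the indicator of \<open>x\<^sub>0\<close>. Every formula valid in the second
  frame is valid in the first: evaluating in the point frame under the valuation
  \<open>V \<circ> (x\<^sub>0 y)\<close> reproduces the values in the limit frame for \<open>U\<close>-almost every \<open>y\<close>.
  Hence no set of formulas separates the two frames.
\<close>

section \<open>Ultrafilters\<close>

definition ultrafilter :: "'a filter \<Rightarrow> bool" where
  "ultrafilter U \<longleftrightarrow> U \<noteq> bot \<and> (\<forall>P. eventually P U \<or> eventually (\<lambda>x. \<not> P x) U)"

lemma ex_maximal_proper_filter_le:
  fixes F :: "'a filter"
  assumes "F \<noteq> bot"
  obtains U where "U \<noteq> bot" "U \<le> F" "\<And>G. G \<noteq> bot \<Longrightarrow> G \<le> U \<Longrightarrow> G = U"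
proof -
  let ?R = "{(G, H). H \<noteq> bot \<and> H \<le> G \<and> G \<le> F}"
  have field: "Field ?R = {G. G \<noteq> bot \<and> G \<le> F}"
    by (auto simp: Field_def bot_unique)
  have "\<exists>M\<in>Field ?R. \<forall>G\<in>Field ?R. (M, G) \<in> ?R \<longrightarrow> G = M"
  proof (rule Zorns_po_lemma)
    show "Partial_order ?R"
      by (auto simp: partial_order_on_def preorder_on_def
          antisym_def refl_on_def trans_def Field_def bot_unique)
    show "\<exists>B\<in>Field ?R. \<forall>G\<in>C. (G, B) \<in> ?R" if C: "C \<in> Chains ?R" for C
    proof (cases "C = {}")
      case True
      then show ?thesis using assms field by auto
    next
      case False
      have "Inf C = bot \<longleftrightarrow> (\<exists>G\<in>C. G = bot)"
        unfolding trivial_limit_def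
        using C False by (intro eventually_Inf_base) (auto simp: Chains_def)
      then have "Inf C \<noteq> bot"
        using C by (auto simp: Chains_def)
      moreover obtain G0 where "G0 \<in> C"
        using False by auto
      then have "Inf C \<le> F"
        using C by (auto intro!: Inf_lower2[of G0] simp: Chains_def)
      ultimately show ?thesis
        using C field by (auto intro!: bexI[of _ "Inf C"] Inf_lower simp: Chains_def)
    qed
  qed
  then show ?thesis
    using that unfolding field by (auto simp: order_trans)
qed

lemma maximal_proper_filter_ultrafilter:
  assumes "U \<noteq> bot" and maximal: "\<And>G. G \<noteq> bot \<Longrightarrow> G \<le> U \<Longrightarrow> G = U"
  shows "ultrafilter U"
  unfolding ultrafilter_def
proof (intro conjI allI assms(1) disjCI)
  fix P
  assume "\<not> eventually (\<lambda>x. \<not> P x) U"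
  then have "inf U (Filter.principal {x. P x}) \<noteq> bot"
    by (simp add: trivial_limit_def eventually_inf_principal not_eventually)
  then have "inf U (Filter.principal {x. P x}) = U"
    by (rule maximal) simp
  moreover have "eventually P (inf U (Filter.principal {x. P x}))"
    by (simp add: eventually_inf_principal)
  ultimately show "eventually P U" by simp
qed

lemma ex_ultrafilter_le:
  assumes "F \<noteq> bot"
  obtains U where "ultrafilter U" "U \<le> F"
  using ex_maximal_proper_filter_le[OF assms] maximal_proper_filter_ultrafilter by metis

lemma ultrafilter_not_bot: "ultrafilter U \<Longrightarrow> U \<noteq> bot"
  by (simp add: ultrafilter_def)

lemma ultrafilter_eventually_const:
  assumes U: "ultrafilter U" and "finite S" and "eventually (\<lambda>x. f x \<in> S) U"
  shows "\<exists>v. eventually (\<lambda>x. f x = v) U"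
  using \<open>finite S\<close> \<open>eventually (\<lambda>x. f x \<in> S) U\<close>
proof (induction S rule: finite_induct)
  case empty
  then show ?case
    using eventually_happens'[OF ultrafilter_not_bot[OF U]] by auto
next
  case (insert a S)
  show ?case
  proof (cases "eventually (\<lambda>x. f x = a) U")
    case False
    then have "eventually (\<lambda>x. f x \<noteq> a) U"
      using U unfolding ultrafilter_def by blast
    with insert.prems have "eventually (\<lambda>x. f x \<in> S) U"
      by (rule eventually_elim2) auto
    then show ?thesis by (rule insert.IH)
  qed blast
qed

definition ultra_lim :: "'a filter \<Rightarrow> ('a \<Rightarrow> 'b) \<Rightarrow> 'b" where
  "ultra_lim U f = (SOME v. eventually (\<lambda>x. f x = v) U)"

lemma eventually_eq_ultra_lim:
  assumes "ultrafilter U" and "finite (range f)"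
  shows "eventually (\<lambda>x. f x = ultra_lim U f) U"
  unfolding ultra_lim_def
  by (rule someI_ex, rule ultrafilter_eventually_const[OF assms]) auto

lemma ultra_lim_eqI:
  assumes U: "ultrafilter U" and "finite (range f)" and "eventually (\<lambda>x. f x = v) U"
  shows "ultra_lim U f = v"
proof -
  have "eventually (\<lambda>x. f x = v \<and> f x = ultra_lim U f) U"
    using assms(3) eventually_eq_ultra_lim[OF U assms(2)] by (rule eventually_conj)
  then show ?thesis
    using eventually_happens'[OF ultrafilter_not_bot[OF U]] by force
qed

lemma ultra_lim_attained:
  assumes "ultrafilter U" and "finite (range f)"
  obtains x where "f x = ultra_lim U f"
  using eventually_happens'[OF ultrafilter_not_bot eventually_eq_ultra_lim] assms by blast

lemma ultra_lim_const: "ultrafilter U \<Longrightarrow> ultra_lim U (\<lambda>x. c) = c"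
  by (rule ultra_lim_eqI) auto

lemma finite_range_comp2:
  assumes "finite (range f)" "finite (range g)"
  shows "finite (range (\<lambda>x. h (f x) (g x)))"
proof -
  have "range (\<lambda>x. h (f x) (g x)) \<subseteq> case_prod h ` (range f \<times> range g)"
    by auto
  then show ?thesis
    using assms by (meson finite_SigmaI finite_imageI finite_subset)
qed

lemma finite_range_comp: "finite (range f) \<Longrightarrow> finite (range (\<lambda>x. h (f x)))"
  using finite_imageI[of "range f" h] by (simp add: image_image)

lemma ultra_lim_comp:
  assumes U: "ultrafilter U" and f: "finite (range f)"
  shows "ultra_lim U (\<lambda>x. h (f x)) = h (ultra_lim U f)"
  by (rule ultra_lim_eqI[OF U finite_range_comp[OF f]])
     (rule eventually_mono[OF eventually_eq_ultra_lim[OF U f]], simp)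

lemma ultra_lim_comp2:
  assumes U: "ultrafilter U" and f: "finite (range f)" and g: "finite (range g)"
  shows "ultra_lim U (\<lambda>x. h (f x) (g x)) = h (ultra_lim U f) (ultra_lim U g)"
  by (rule ultra_lim_eqI[OF U finite_range_comp2[OF f g]])
     (rule eventually_elim2[OF eventually_eq_ultra_lim[OF U f] eventually_eq_ultra_lim[OF U g]],
      simp)

lemma finite_luk: "finite (luk n)"
proof -
  have "luk n = (\<lambda>k. real k / real n) ` {..n}"
    unfolding luk_def by auto
  then show ?thesis by simp
qed

lemma luk_bounds: "x \<in> luk n \<Longrightarrow> 0 \<le> x \<and> x \<le> 1"
  unfolding luk_def by (cases "n = 0") auto

lemma zero_in_luk: "0 \<in> luk n"
  unfolding luk_def by force

lemma one_in_luk: "n \<ge> 1 \<Longrightarrow> 1 \<in> luk n"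
  unfolding luk_def by (rule CollectI, rule exI[of _ n]) simp

lemma finite_range_LF: "f \<in> LF n \<Longrightarrow> finite (range f)"
  unfolding LF_def using finite_luk by (metis finite_subset image_subset_iff mem_Collect_eq)

lemma lpow_one: "lpow k 1 = 1"
  by (induction k) (auto simp: lodot_def)

lemma lpow_le_one: "x \<le> 1 \<Longrightarrow> lpow k x \<le> 1"
  by (induction k) (auto simp: lodot_def)

lemma lpow_zero: "k \<ge> 1 \<Longrightarrow> lpow k 0 = 0"
proof (induction k)
  case (Suc k)
  have "lpow k 0 \<le> 1" by (rule lpow_le_one) simp
  then show ?case by (simp add: lodot_def)
qed simp

section \<open>The two frames\<close>

definition point_frame :: "'s \<Rightarrow> ('p, 's) frame" where
  "point_frame x\<^sub>0 = (\<lambda>u C f. f x\<^sub>0)"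

definition ultrafilter_frame :: "'s filter \<Rightarrow> ('p, 's) frame" where
  "ultrafilter_frame U = (\<lambda>u C f. ultra_lim U f)"

lemma point_frame_truly_playable:
  assumes n: "n \<ge> 1"
  shows "truly_playable_frame n (point_frame x\<^sub>0)"
  unfolding truly_playable_frame_def truly_playable_def playable_def
proof (intro allI conjI)
  fix u
  let ?E = "point_frame x\<^sub>0 u"
  show "eff_fun n ?E" "outcome_monotonic n ?E" "N_maximal n ?E" "superadditive n ?E"
    "homogeneous n ?E" "liveness ?E" "safety ?E"
    unfolding eff_fun_def outcome_monotonic_def N_maximal_def superadditive_def
      homogeneous_def liveness_def safety_def point_frame_def LF_def
    by (auto simp: lneg_def)
  let ?g = "\<lambda>s. if s = x\<^sub>0 then 1 else 0"
  have g: "?g \<in> LF n"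
    unfolding LF_def using zero_in_luk one_in_luk[OF n] by auto
  have gen: "f x\<^sub>0 = 1 \<longleftrightarrow> (\<forall>s. lpow n (?g s) \<le> f s)" if "f \<in> LF n" for f
  proof -
    have "0 \<le> f s \<and> f s \<le> 1" for s
      using that luk_bounds unfolding LF_def by blast
    then show ?thesis
      by (auto simp: lpow_one lpow_zero[OF n] intro: antisym)
  qed
  show "principal n ?E"
    unfolding principal_def point_frame_def using gen by (intro bexI[OF _ g]) blast
qed

lemma ultrafilter_frame_playable:
  fixes U :: "'s filter"
  assumes U: "ultrafilter U"
  shows "playable_frame n (ultrafilter_frame U)"
  unfolding playable_frame_def playable_def
proof (intro allI conjI)
  fix u
  let ?E = "ultrafilter_frame U u"
  have lim_comp: "ultra_lim U (\<lambda>s. h (f s)) = h (ultra_lim U f)"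
    if "f \<in> LF n" for f :: "'s \<Rightarrow> real" and h :: "real \<Rightarrow> real"
    using ultra_lim_comp[OF U finite_range_LF[OF that]] .
  have lim_comp2: "ultra_lim U (\<lambda>s. h (f s) (g s)) = h (ultra_lim U f) (ultra_lim U g)"
    if "f \<in> LF n" "g \<in> LF n" for f g :: "'s \<Rightarrow> real" and h :: "real \<Rightarrow> real \<Rightarrow> real"
    using ultra_lim_comp2[OF U finite_range_LF[OF that(1)] finite_range_LF[OF that(2)]] .
  show "eff_fun n ?E"
    unfolding eff_fun_def ultrafilter_frame_def
  proof (intro allI impI)
    fix f :: "'s \<Rightarrow> real"
    assume f: "f \<in> LF n"
    then obtain s where "f s = ultra_lim U f"
      using ultra_lim_attained[OF U finite_range_LF] by blast
    with f show "ultra_lim U f \<in> luk n"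
      unfolding LF_def by (metis mem_Collect_eq)
  qed
  show "outcome_monotonic n ?E"
    unfolding outcome_monotonic_def ultrafilter_frame_def
  proof (intro allI impI)
    fix f g :: "'s \<Rightarrow> real"
    assume f: "f \<in> LF n" and g: "g \<in> LF n" and le: "\<forall>s. g s \<le> f s"
    have "(\<lambda>s. max (f s) (g s)) = f"
      using le by (intro ext) (simp add: max_absorb1)
    then have "ultra_lim U f = max (ultra_lim U f) (ultra_lim U g)"
      using lim_comp2[OF f g, of max] by simp
    then show "ultra_lim U g \<le> ultra_lim U f"
      by (metis max.cobounded2)
  qed
  show "N_maximal n ?E"
    unfolding N_maximal_def ultrafilter_frame_def
    using lim_comp[of _ lneg] by (simp add: lneg_def)
  show "superadditive n ?E"
    unfolding superadditive_def ultrafilter_frame_def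
    using lim_comp2[of _ _ min] by simp
  show "homogeneous n ?E"
    unfolding homogeneous_def ultrafilter_frame_def
    using lim_comp[of _ "\<lambda>x. loplus x x"] lim_comp[of _ "\<lambda>x. lodot x x"] by simp
  show "liveness ?E" "safety ?E"
    unfolding liveness_def safety_def ultrafilter_frame_def
    by (simp_all add: ultra_lim_const[OF U])
qed

lemma ultrafilter_frame_not_principal:
  assumes U: "ultrafilter U" and free: "\<And>b. eventually (\<lambda>s. s \<noteq> b) U" and n: "n \<ge> 1"
  shows "\<not> principal n (ultrafilter_frame U u)"
proof
  assume "principal n (ultrafilter_frame U u)"
  then obtain g where g: "g \<in> LF n"
    and gen: "\<And>f. f \<in> LF n \<Longrightarrow> ultra_lim U f = 1 \<longleftrightarrow> (\<forall>s. lpow n (g s) \<le> f s)"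
    unfolding principal_def ultrafilter_frame_def by blast
  define f\<^sub>0 where "f\<^sub>0 = (\<lambda>s. if lpow n (g s) \<le> 0 then 0 else (1::real))"
  have f\<^sub>0: "f\<^sub>0 \<in> LF n"
    unfolding f\<^sub>0_def LF_def using zero_in_luk one_in_luk[OF n] by auto
  have "\<forall>s. lpow n (g s) \<le> f\<^sub>0 s"
    using g luk_bounds lpow_le_one unfolding f\<^sub>0_def LF_def by fastforce
  then have ev: "eventually (\<lambda>s. f\<^sub>0 s = 1) U"
    using gen[OF f\<^sub>0] eventually_eq_ultra_lim[OF U finite_range_LF[OF f\<^sub>0]] by simp
  then obtain b where "f\<^sub>0 b = 1"
    using eventually_happens'[OF ultrafilter_not_bot[OF U]] by blast
  then have b: "lpow n (g b) > 0"
    unfolding f\<^sub>0_def by (auto split: if_splits)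
  define f\<^sub>1 where "f\<^sub>1 = (\<lambda>s. if s = b then 0 else f\<^sub>0 s)"
  have f\<^sub>1: "f\<^sub>1 \<in> LF n"
    using f\<^sub>0 zero_in_luk unfolding f\<^sub>1_def LF_def by auto
  have "eventually (\<lambda>s. f\<^sub>1 s = 1) U"
    using ev free[of b] by (rule eventually_elim2) (simp add: f\<^sub>1_def)
  then have "ultra_lim U f\<^sub>1 = 1"
    by (rule ultra_lim_eqI[OF U finite_range_LF[OF f\<^sub>1]])
  then have "lpow n (g b) \<le> f\<^sub>1 b"
    using gen[OF f\<^sub>1] by blast
  then show False
    using b by (simp add: f\<^sub>1_def)
qed

section \<open>Transfer of validity\<close>

lemma finite_range_val_ultrafilter_frame:
  assumes "\<forall>u p. V u p \<in> luk n"
  shows "finite (range (val (ultrafilter_frame U) V \<phi>))"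
proof (induction \<phi>)
  case (Var p)
  have "range (\<lambda>u. V u p) \<subseteq> luk n"
    using assms by auto
  then show ?case
    using finite_luk by (simp add: finite_subset)
next
  case (Imp a b)
  then show ?case by (simp add: finite_range_comp2)
next
  case (Neg a)
  then show ?case by (simp add: finite_range_comp)
qed (simp_all add: ultrafilter_frame_def image_def)

text \<open>
  In the point frame a \<open>\<box>\<close>-formula is evaluated at \<open>x\<^sub>0\<close>, which the transposition sends to
  \<open>y\<close>; for \<open>U\<close>-almost every \<open>y\<close> the value there is the \<open>U\<close>-limit.
\<close>

lemma eventually_val_point_frame_transpose:
  fixes U :: "'s filter" and x\<^sub>0 :: 's and \<phi> :: "'p fm"
  assumes U: "ultrafilter U" and V: "\<forall>u p. V u p \<in> luk n"
  shows "eventually (\<lambda>y. \<forall>s. val (point_frame x\<^sub>0) (\<lambda>s. V (transpose x\<^sub>0 y s)) \<phi> s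
            = val (ultrafilter_frame U) V \<phi> (transpose x\<^sub>0 y s)) U"
proof (induction \<phi>)
  case (Imp a b)
  then show ?case by (rule eventually_elim2) simp
next
  case (Neg a)
  then show ?case by (rule eventually_mono) simp
next
  case (Box C a)
  show ?case
    using Box eventually_eq_ultra_lim[OF U finite_range_val_ultrafilter_frame[OF V]]
    by (rule eventually_elim2) (simp add: point_frame_def ultrafilter_frame_def)
qed simp_all

lemma valid_point_frame_imp_valid_ultrafilter_frame:
  fixes U :: "'s filter" and x\<^sub>0 :: 's and \<phi> :: "'p fm"
  assumes U: "ultrafilter U" and valid: "valid_in_frame n (point_frame x\<^sub>0) \<phi>"
  shows "valid_in_frame n (ultrafilter_frame U) \<phi>"
  unfolding valid_in_frame_def
proof (intro allI impI)
  fix V :: "'s \<Rightarrow> nat \<Rightarrow> real" and u :: 's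
  assume V: "\<forall>u p. V u p \<in> luk n"
  obtain y where y: "\<forall>s. val (point_frame x\<^sub>0) (\<lambda>s. V (transpose x\<^sub>0 y s)) \<phi> s
                       = val (ultrafilter_frame U) V \<phi> (transpose x\<^sub>0 y s)"
    using eventually_happens'[OF ultrafilter_not_bot[OF U]
        eventually_val_point_frame_transpose[OF U V]] by blast
  have "val (point_frame x\<^sub>0) (\<lambda>s. V (transpose x\<^sub>0 y s)) \<phi> (transpose x\<^sub>0 y u) = 1"
    using valid[unfolded valid_in_frame_def, rule_format, of "\<lambda>s. V (transpose x\<^sub>0 y s)"] V
    by simp
  then show "val (ultrafilter_frame U) V \<phi> u = 1"
    using y[rule_format, of "transpose x\<^sub>0 y u"] by simp
qed

theorem mainTheorem10:
  fixes n :: nat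
  assumes "n \<ge> 1"
    and "CARD('p::finite) \<ge> 2"
    and "infinite (UNIV :: 's set)"
  shows "\<not> (\<exists>\<Lambda> :: 'p fm set. \<forall>F :: ('p, 's) frame.
            playable_frame n F \<longrightarrow>
              (truly_playable_frame n F \<longleftrightarrow> (\<forall>\<phi>\<in>\<Lambda>. valid_in_frame n F \<phi>)))"
proof
  assume "\<exists>\<Lambda> :: 'p fm set. \<forall>F :: ('p, 's) frame.
            playable_frame n F \<longrightarrow>
              (truly_playable_frame n F \<longleftrightarrow> (\<forall>\<phi>\<in>\<Lambda>. valid_in_frame n F \<phi>))"
  then obtain \<Lambda> :: "'p fm set" where \<Lambda>: "\<And>F :: ('p, 's) frame. playable_frame n F \<Longrightarrow>
      truly_playable_frame n F \<longleftrightarrow> (\<forall>\<phi>\<in>\<Lambda>. valid_in_frame n F \<phi>)"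
    by blast
  obtain U :: "'s filter" where U: "ultrafilter U" "U \<le> cofinite"
    using ex_ultrafilter_le[of cofinite] assms(3) by auto
  have free: "eventually (\<lambda>s. s \<noteq> b) U" for b
    using U(2) by (auto simp: le_filter_def eventually_cofinite)
  fix x\<^sub>0 :: 's
  have "truly_playable_frame n (point_frame x\<^sub>0 :: ('p, 's) frame)"
    using point_frame_truly_playable[OF assms(1)] .
  then have "\<forall>\<phi>\<in>\<Lambda>. valid_in_frame n (point_frame x\<^sub>0) \<phi>"
    using \<Lambda> unfolding truly_playable_frame_def truly_playable_def playable_frame_def by blast
  then have "\<forall>\<phi>\<in>\<Lambda>. valid_in_frame n (ultrafilter_frame U) \<phi>"
    using valid_point_frame_imp_valid_ultrafilter_frame[OF U(1)] by blast
  then have "truly_playable_frame n (ultrafilter_frame U :: ('p, 's) frame)"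
    using \<Lambda>[OF ultrafilter_frame_playable[OF U(1)]] by blast
  then show False
    using ultrafilter_frame_not_principal[OF U(1) free assms(1)]
    unfolding truly_playable_frame_def truly_playable_def by blast
qed

end
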